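(* Let $k,n$ be integers with $n\geq 2$ and $k\geq 3$, and let $c$ be an exact $k$-coloring of $\mathcal{B}_n$. Then $\mathcal{B}_n$ contains no rainbow induced copy of $\mathcal{C}_3$ if and only if $c(\emptyset)=c([n])$ and, for any two sets $X,Y$ with $\emptyset\subsetneq X,Y\subsetneq[n]$ such that $c(X),c(Y),c(\emptyset)$ are pairwise distinct, $X$ and $Y$ are incomparable.
   Context: $\mathcal{B}_n$ denotes the Boolean lattice of all subsets of $[n]$ ordered by inclusion. An exact $k$-coloring of $\mathcal{B}_n$ is a map from $\mathcal{B}_n$ to $[k]$ that is surjective. A rainbow induced copy of $\mathcal{C}_3$ is a chain $X\subsetneq Y\subsetneq Z$ in $\mathcal{B}_n$ with $c(X),c(Y),c(Z)$ pairwise distinct. *)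

theory Defs
  imports Main
begin

definition boolean_lattice :: "nat \<Rightarrow> nat set set" where
  "boolean_lattice n = Pow {1..n}"

definition exact_coloring :: "nat \<Rightarrow> nat \<Rightarrow> (nat set \<Rightarrow> nat) \<Rightarrow> bool" where
  "exact_coloring n k c \<longleftrightarrow> c ` boolean_lattice n = {1..k}"

definition has_rainbow_C3 :: "nat \<Rightarrow> (nat set \<Rightarrow> nat) \<Rightarrow> bool" where
  "has_rainbow_C3 n c \<longleftrightarrow>
     (\<exists>X Y Z. X \<in> boolean_lattice n \<and> Y \<in> boolean_lattice n \<and> Z \<in> boolean_lattice n \<and>
        X \<subset> Y \<and> Y \<subset> Z \<and> c X \<noteq> c Y \<and> c Y \<noteq> c Z \<and> c X \<noteq> c Z)"

end

theory Submission
  imports Defs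
begin

text \<open>A rainbow chain \<open>X \<subset> Y \<subset> Z\<close> has at most one member of colour \<open>c {}\<close>, so it contains a
  comparable pair \<open>A \<subseteq> B\<close> such that \<open>c A\<close>, \<open>c B\<close>, \<open>c {}\<close> are pairwise distinct; conversely such a
  pair gives the rainbow chain \<open>{} \<subset> A \<subset> B\<close>. If \<open>c {} \<noteq> c {1..n}\<close>, any set of a third colour
  (one exists as \<open>k \<ge> 3\<close>) forms such a pair with \<open>{1..n}\<close>. If \<open>c {} = c {1..n}\<close>, the colour
  condition alone forces \<open>{} \<subset> A\<close> and \<open>B \<subset> {1..n}\<close>.\<close>

lemma mem_boolean_lattice_iff [simp]: "X \<in> boolean_lattice n \<longleftrightarrow> X \<subseteq> {1..n}"
  by (simp add: boolean_lattice_def)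

lemma ex_third_value:
  assumes "card (f ` A) \<ge> 3"
  shows "\<exists>x\<in>A. f x \<noteq> a \<and> f x \<noteq> b"
proof (rule ccontr)
  assume "\<not> ?thesis"
  then have "f ` A \<subseteq> {a, b}" by auto
  then have "card (f ` A) \<le> card {a, b}" by (intro card_mono) auto
  also have "\<dots> \<le> 2" by (simp add: card_insert_le_m1)
  finally show False using assms by simp
qed

lemma exact_coloring_ex_third_color:
  assumes "k \<ge> 3" and "exact_coloring n k c"
  shows "\<exists>W \<subseteq> {1..n}. c W \<noteq> a \<and> c W \<noteq> b"
proof -
  have "card (c ` boolean_lattice n) \<ge> 3"
    using assms by (simp add: exact_coloring_def)
  then obtain W where "W \<in> boolean_lattice n" "c W \<noteq> a" "c W \<noteq> b"
    using ex_third_value[of c "boolean_lattice n" a b] by blast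
  then show ?thesis by auto
qed

lemma rainbow_chain_obtain_pair_avoiding_color:
  fixes X Y Z :: "'a :: order"
  assumes "X \<le> Y" "Y \<le> Z" "c X \<noteq> c Y" "c Y \<noteq> c Z" "c X \<noteq> c Z"
  obtains A B where "A \<le> B" "A \<in> {X, Y, Z}" "B \<in> {X, Y, Z}"
    "c A \<noteq> c B" "c A \<noteq> d" "c B \<noteq> d"
proof -
  consider "c X = d" | "c Y = d" | "c X \<noteq> d" "c Y \<noteq> d" by blast
  then show thesis
  proof cases
    case 1
    then show thesis using that[of Y Z] assms by auto
  next
    case 2
    then show thesis using that[of X Z] assms order_trans[OF assms(1,2)] by auto
  next
    case 3
    then show thesis using that[of X Y] assms by auto
  qed
qed

lemma has_rainbow_C3_iff_pair_avoiding_empty_color: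
  "has_rainbow_C3 n c \<longleftrightarrow>
    (\<exists>X Y. X \<subseteq> Y \<and> Y \<subseteq> {1..n} \<and> c X \<noteq> c Y \<and> c X \<noteq> c {} \<and> c Y \<noteq> c {})"
proof
  assume "has_rainbow_C3 n c"
  then obtain X Y Z where Z: "Z \<subseteq> {1..n}" and chain: "X \<subseteq> Y" "Y \<subseteq> Z"
    and colors: "c X \<noteq> c Y" "c Y \<noteq> c Z" "c X \<noteq> c Z"
    unfolding has_rainbow_C3_def mem_boolean_lattice_iff by (blast dest: psubset_imp_subset)
  from chain colors obtain A B where "A \<subseteq> B" "A \<in> {X, Y, Z}" "B \<in> {X, Y, Z}"
    and "c A \<noteq> c B" "c A \<noteq> c {}" "c B \<noteq> c {}"
    by (rule rainbow_chain_obtain_pair_avoiding_color)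
  moreover from \<open>B \<in> {X, Y, Z}\<close> chain Z have "B \<subseteq> {1..n}" by auto
  ultimately show "\<exists>X Y. X \<subseteq> Y \<and> Y \<subseteq> {1..n} \<and> c X \<noteq> c Y \<and> c X \<noteq> c {} \<and> c Y \<noteq> c {}"
    by blast
next
  assume "\<exists>X Y. X \<subseteq> Y \<and> Y \<subseteq> {1..n} \<and> c X \<noteq> c Y \<and> c X \<noteq> c {} \<and> c Y \<noteq> c {}"
  then obtain X Y where "X \<subseteq> Y" "Y \<subseteq> {1..n}" "c X \<noteq> c Y" "c X \<noteq> c {}" "c Y \<noteq> c {}"
    by blast
  then show "has_rainbow_C3 n c"
    unfolding has_rainbow_C3_def
    by (intro exI[of _ "{}"] exI[of _ X] exI[of _ Y]) auto
qed

lemma rainbow_C3_if_empty_top_colors_differ: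
  assumes "k \<ge> 3" and "exact_coloring n k c" and "c {} \<noteq> c {1..n}"
  shows "has_rainbow_C3 n c"
proof -
  obtain W where "W \<subseteq> {1..n}" "c W \<noteq> c {}" "c W \<noteq> c {1..n}"
    using exact_coloring_ex_third_color[OF assms(1,2)] by blast
  with assms(3) show ?thesis
    unfolding has_rainbow_C3_iff_pair_avoiding_empty_color
    by (intro exI[of _ W] exI[of _ "{1..n}"]) auto
qed

lemma no_rainbow_C3_iff_incomparable:
  assumes "c {} = c {1..n}"
  shows "\<not> has_rainbow_C3 n c \<longleftrightarrow>
    (\<forall>X Y. X \<in> boolean_lattice n \<and> Y \<in> boolean_lattice n \<and>
        {} \<subset> X \<and> X \<subset> {1..n} \<and> {} \<subset> Y \<and> Y \<subset> {1..n} \<and>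
        c X \<noteq> c Y \<and> c X \<noteq> c {} \<and> c Y \<noteq> c {}
        \<longrightarrow> \<not> X \<subseteq> Y \<and> \<not> Y \<subseteq> X)"
proof
  assume no_rainbow: "\<not> has_rainbow_C3 n c"
  have "\<not> X \<subseteq> Y"
    if "Y \<subset> {1..n}" "c X \<noteq> c Y" "c X \<noteq> c {}" "c Y \<noteq> c {}" for X Y
  proof
    assume "X \<subseteq> Y"
    with that have "has_rainbow_C3 n c"
      unfolding has_rainbow_C3_iff_pair_avoiding_empty_color
      by (intro exI[of _ X] exI[of _ Y]) auto
    with no_rainbow show False by contradiction
  qed
  then show "\<forall>X Y. X \<in> boolean_lattice n \<and> Y \<in> boolean_lattice n \<and>
        {} \<subset> X \<and> X \<subset> {1..n} \<and> {} \<subset> Y \<and> Y \<subset> {1..n} \<and>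
        c X \<noteq> c Y \<and> c X \<noteq> c {} \<and> c Y \<noteq> c {}
        \<longrightarrow> \<not> X \<subseteq> Y \<and> \<not> Y \<subseteq> X"
    by simp
next
  assume incomparable: "\<forall>X Y. X \<in> boolean_lattice n \<and> Y \<in> boolean_lattice n \<and>
        {} \<subset> X \<and> X \<subset> {1..n} \<and> {} \<subset> Y \<and> Y \<subset> {1..n} \<and>
        c X \<noteq> c Y \<and> c X \<noteq> c {} \<and> c Y \<noteq> c {}
        \<longrightarrow> \<not> X \<subseteq> Y \<and> \<not> Y \<subseteq> X"
  show "\<not> has_rainbow_C3 n c"
  proof
    assume "has_rainbow_C3 n c"
    then obtain X Y where "X \<subseteq> Y" "Y \<subseteq> {1..n}" "c X \<noteq> c Y" "c X \<noteq> c {}" "c Y \<noteq> c {}"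
      unfolding has_rainbow_C3_iff_pair_avoiding_empty_color by blast
    moreover from this assms have "X \<noteq> {}" "Y \<noteq> {1..n}" by auto
    ultimately show False
      using incomparable[rule_format, of X Y] by auto
  qed
qed

theorem theorem2p1:
  fixes n k :: nat and c :: "nat set \<Rightarrow> nat"
  assumes "n \<ge> 2" and "k \<ge> 3" and "exact_coloring n k c"
  shows "\<not> has_rainbow_C3 n c \<longleftrightarrow>
    (c {} = c {1..n} \<and>
     (\<forall>X Y. X \<in> boolean_lattice n \<and> Y \<in> boolean_lattice n \<and>
        {} \<subset> X \<and> X \<subset> {1..n} \<and> {} \<subset> Y \<and> Y \<subset> {1..n} \<and>
        c X \<noteq> c Y \<and> c X \<noteq> c {} \<and> c Y \<noteq> c {}
        \<longrightarrow> \<not> X \<subseteq> Y \<and> \<not> Y \<subseteq> X))"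
proof (cases "c {} = c {1..n}")
  case True
  then show ?thesis using no_rainbow_C3_iff_incomparable[OF True] by simp
next
  case False
  then show ?thesis using rainbow_C3_if_empty_top_colors_differ[OF assms(2,3)] by simp
qed

end
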